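(* In the compulsory constrained two-facility location setting described in the context, for every location profile $\mathbf{x}\in\mathbb{R}^n$ there exists an optimal solution for the sum cost objective (minimizing $\sum_{j=1}^n \max\{|y_1-x_j|,|y_2-x_j|\}$ over feasible $(y_1,y_2)$) that belongs to $AP$, i.e. whose two facility locations are $\{a_k,a_{k+1}\}$ for some $k$.
   Context: $n$ agents have locations $x_1,\dots,x_n\in\mathbb{R}$. $A=\{a_1\le a_2\le\dots\le a_m\}$ is a multiset of alternative locations, $m\ge2$; a feasible outcome places $F_1$ at $y_1\in A$ and $F_2$ at $y_2\in A\setminus\{y_1\}$ (removing one copy from the multiset). Each agent is served by both facilities, with cost $\max\{|y_1-x_j|,|y_2-x_j|\}$. $AP=\{(a_1,a_2),(a_2,a_3),\dots,(a_{m-1},a_m)\}$ (a pair is identified with placing the two facilities at its two entries, in either order). *)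

theory Defs
  imports Main "HOL.Real"
begin

definition agent_cost :: "real \<Rightarrow> real \<Rightarrow> real \<Rightarrow> real" where
  "agent_cost y1 y2 x = max \<bar>y1 - x\<bar> \<bar>y2 - x\<bar>"

definition sum_cost :: "real list \<Rightarrow> real \<Rightarrow> real \<Rightarrow> real" where
  "sum_cost xs y1 y2 = (\<Sum>j<length xs. agent_cost y1 y2 (xs ! j))"

text \<open>The multiset A of alternatives is a sorted list a; a feasible outcome picks two
  distinct positions i, j (so two copies of the same value may both be used).\<close>
definition feasible :: "real list \<Rightarrow> real \<Rightarrow> real \<Rightarrow> bool" where
  "feasible a y1 y2 = (\<exists>i j. i < length a \<and> j < length a \<and> i \<noteq> j \<and> y1 = a ! i \<and> y2 = a ! j)"

definition optimal_sum :: "real list \<Rightarrow> real list \<Rightarrow> real \<Rightarrow> real \<Rightarrow> bool" where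
  "optimal_sum a xs y1 y2 = (feasible a y1 y2 \<and>
     (\<forall>z1 z2. feasible a z1 z2 \<longrightarrow> sum_cost xs y1 y2 \<le> sum_cost xs z1 z2))"

definition in_AP :: "real list \<Rightarrow> real \<Rightarrow> real \<Rightarrow> bool" where
  "in_AP a y1 y2 = (\<exists>k. Suc k < length a \<and>
     ((y1 = a ! k \<and> y2 = a ! Suc k) \<or> (y1 = a ! Suc k \<and> y2 = a ! k)))"

end

theory Submission
  imports Defs
begin

text \<open>An agent's cost is its distance to the farther facility. Keeping the lower facility at
  a_i and moving the upper one from a_j (i < j) down to a_(i+1) therefore never increases any
  agent's cost, so every feasible outcome is dominated by an adjacent pair; a cheapest adjacent
  pair, which exists since there are finitely many, is then optimal.\<close>

lemma agent_cost_commute: "agent_cost y1 y2 x = agent_cost y2 y1 x"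
  unfolding agent_cost_def by simp

lemma sum_cost_commute: "sum_cost xs y1 y2 = sum_cost xs y2 y1"
  unfolding sum_cost_def by (simp add: agent_cost_commute)

lemma agent_cost_mono_right:
  assumes "u \<le> v" "v \<le> w"
  shows "agent_cost u v x \<le> agent_cost u w x"
  using assms unfolding agent_cost_def by (auto simp: abs_if max_def)

lemma sum_cost_mono_right:
  assumes "u \<le> v" "v \<le> w"
  shows "sum_cost xs u v \<le> sum_cost xs u w"
  unfolding sum_cost_def using assms by (intro sum_mono agent_cost_mono_right)

lemma sum_cost_adjacent_le:
  assumes "sorted a" "i < j" "j < length a"
  shows "sum_cost xs (a ! i) (a ! Suc i) \<le> sum_cost xs (a ! i) (a ! j)"
  using assms by (intro sum_cost_mono_right) (auto intro: sorted_nth_mono)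

lemma feasible_dominated_by_adjacent:
  assumes "sorted a" "feasible a y1 y2"
  obtains k where "Suc k < length a" "sum_cost xs (a ! k) (a ! Suc k) \<le> sum_cost xs y1 y2"
proof -
  obtain i j where ij: "i < length a" "j < length a" "i \<noteq> j" "y1 = a ! i" "y2 = a ! j"
    using assms(2) unfolding feasible_def by blast
  show ?thesis
  proof (cases "i < j")
    case True
    with ij assms(1) show ?thesis
      by (intro that[of i]) (auto intro: sum_cost_adjacent_le)
  next
    case False
    have "sum_cost xs y1 y2 = sum_cost xs (a ! j) (a ! i)"
      using ij by (simp add: sum_cost_commute)
    with False ij assms(1) show ?thesis
      by (intro that[of j]) (auto intro: sum_cost_adjacent_le)
  qed
qed

lemma feasible_adjacent: "Suc k < length a \<Longrightarrow> feasible a (a ! k) (a ! Suc k)"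
  unfolding feasible_def by (intro exI[of _ k] exI[of _ "Suc k"]) auto

lemma in_AP_adjacent: "Suc k < length a \<Longrightarrow> in_AP a (a ! k) (a ! Suc k)"
  unfolding in_AP_def by blast

theorem lemma2:
  fixes a xs :: "real list"
  assumes "sorted a" and "length a \<ge> 2"
  shows "\<exists>y1 y2. optimal_sum a xs y1 y2 \<and> in_AP a y1 y2"
proof -
  let ?cost = "\<lambda>k. sum_cost xs (a ! k) (a ! Suc k)"
  have "finite {k. Suc k < length a}"
    by (rule finite_subset[of _ "{..<length a}"]) auto
  moreover have "0 \<in> {k. Suc k < length a}"
    using assms(2) by simp
  ultimately obtain k where "is_arg_min ?cost (\<lambda>k. k \<in> {k. Suc k < length a}) k"
    using ex_is_arg_min_if_finite by (metis empty_iff)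
  then have k_len: "Suc k < length a"
    and k_min: "\<And>k'. Suc k' < length a \<Longrightarrow> ?cost k \<le> ?cost k'"
    by (simp_all add: is_arg_min_linorder)
  have "sum_cost xs (a ! k) (a ! Suc k) \<le> sum_cost xs z1 z2" if feas: "feasible a z1 z2" for z1 z2
  proof -
    obtain k' where "Suc k' < length a" "?cost k' \<le> sum_cost xs z1 z2"
      using feasible_dominated_by_adjacent[OF assms(1) feas] .
    with k_min show ?thesis by fastforce
  qed
  with k_len have "optimal_sum a xs (a ! k) (a ! Suc k)"
    unfolding optimal_sum_def by (simp add: feasible_adjacent)
  with k_len show ?thesis
    using in_AP_adjacent by blast
qed

end
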